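(* In the privacy game with $\varrho\ge 0$, fix $\epsilon>0$ and $(\alpha^0,\beta^0)\in A\times B$, and let $\{(\alpha^k,\beta^k)\}_{k\in\mathbb{N}}$ be generated by the following thresholded best-response dynamics: for $k=1,2,\dots$, if $k$ is even, choose $\alpha'\in\arg\min_{\alpha\in A}U(\alpha,\beta^{k-1})$, set $\alpha^k=\alpha'$ if $U(\alpha^{k-1},\beta^{k-1})-U(\alpha',\beta^{k-1})>\epsilon$ and $\alpha^k=\alpha^{k-1}$ otherwise, and set $\beta^k=\beta^{k-1}$; if $k$ is odd, choose $\beta'\in\arg\min_{\beta\in B}V(\alpha^{k-1},\beta)$, set $\beta^k=\beta'$ if $V(\alpha^{k-1},\beta^{k-1})-V(\alpha^{k-1},\beta')>\epsilon$ and $\beta^k=\beta^{k-1}$ otherwise, and set $\alpha^k=\alpha^{k-1}$. Then $(\alpha^k,\beta^k)\in\mathcal{N}_\epsilon$ for all $k\ge 3+\Psi(\alpha^0,\beta^0)/\epsilon$, where $\Psi(\alpha,\beta)=\xi(\alpha,\beta)+\varrho\zeta(\alpha)$ and $\mathcal{N}_\epsilon=\{(\alpha,\beta)\in A\times B: U(\alpha,\beta)\le U(\alpha',\beta)+\epsilon\ \forall\alpha'\in A,\ V(\alpha,\beta)\le V(\alpha,\beta')+\epsilon\ \forall\beta'\in B\}$.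
   Context: Privacy game. $\mathcal{X},\mathcal{W},\mathcal{Y}$ are finite nonempty sets; $p$ is a joint probability mass function of $(X,Z,W)$ on $\mathcal{X}\times\mathcal{X}\times\mathcal{W}$; $d:\mathcal{X}\times\mathcal{X}\to\mathbb{R}_{\ge 0}$; $\varrho$ is the privacy ratio. Sender policies: $A=\{\alpha=(\alpha_{yzw}):\alpha_{yzw}\in[0,1],\ \sum_{y\in\mathcal{Y}}\alpha_{yzw}=1\ \forall (z,w)\in\mathcal{X}\times\mathcal{W}\}$, with $\alpha_{yzw}=\mathbb{P}\{Y=y\mid Z=z,W=w\}$. Receiver policies: $B=\{\beta=(\beta_{\hat x y}):\beta_{\hat x y}\in[0,1],\ \sum_{\hat x\in\mathcal{X}}\beta_{\hat x y}=1\ \forall y\in\mathcal{Y}\}$, with $\beta_{\hat x y}=\mathbb{P}\{\hat X=\hat x\mid Y=y\}$. Define $\xi(\alpha,\beta)=\sum_{x,\hat x\in\mathcal{X}}\sum_{y\in\mathcal{Y}}\sum_{z\in\mathcal{X}}\sum_{w\in\mathcal{W}}d(x,\hat x)\beta_{\hat x y}\alpha_{yzw}p(x,z,w)$ and $\zeta(\alpha)=\sum_{y,w}P_{yw}\log\frac{P_{yw}}{P_y P_w}$ (with $0\log 0=0$), where $P_{yw}=\sum_{z,x}\alpha_{yzw}p(x,z,w)$, $P_y=\sum_{w}P_{yw}$, $P_w=\sum_{z,x}p(x,z,w)$ (the mutual information $I(Y;W)$). Sender cost $U(\alpha,\beta)=\xi(\alpha,\beta)+\varrho\zeta(\alpha)$;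 receiver cost $V(\alpha,\beta)=\xi(\alpha,\beta)$. *)

theory Defs
  imports Main "HOL-Analysis.Analysis"
begin

text \<open>Privacy game. The finite nonempty sets X, W, Y are the (finite) types
'x, 'w, 'y. p is the joint pmf of (X,Z,W); alpha y z w = P(Y=y | Z=z, W=w);
beta xh y = P(Xhat = xh | Y = y).\<close>

definition pmf3 :: "('x::finite \<Rightarrow> 'x \<Rightarrow> 'w::finite \<Rightarrow> real) \<Rightarrow> bool" where
  "pmf3 p \<longleftrightarrow> (\<forall>x z w. p x z w \<ge> 0) \<and> (\<Sum>x\<in>UNIV. \<Sum>z\<in>UNIV. \<Sum>w\<in>UNIV. p x z w) = 1"

definition senderPolicies :: "('y::finite \<Rightarrow> 'x::finite \<Rightarrow> 'w::finite \<Rightarrow> real) set" where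
  "senderPolicies = {\<alpha>. (\<forall>y z w. 0 \<le> \<alpha> y z w \<and> \<alpha> y z w \<le> 1) \<and>
                        (\<forall>z w. (\<Sum>y\<in>UNIV. \<alpha> y z w) = 1)}"

definition receiverPolicies :: "('x::finite \<Rightarrow> 'y::finite \<Rightarrow> real) set" where
  "receiverPolicies = {\<beta>. (\<forall>xh y. 0 \<le> \<beta> xh y \<and> \<beta> xh y \<le> 1) \<and>
                          (\<forall>y. (\<Sum>xh\<in>UNIV. \<beta> xh y) = 1)}"

definition xi :: "('x::finite \<Rightarrow> 'x \<Rightarrow> 'w::finite \<Rightarrow> real) \<Rightarrow> ('x \<Rightarrow> 'x \<Rightarrow> real)
    \<Rightarrow> ('y::finite \<Rightarrow> 'x \<Rightarrow> 'w \<Rightarrow> real) \<Rightarrow> ('x \<Rightarrow> 'y \<Rightarrow> real) \<Rightarrow> real" where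
  "xi p d \<alpha> \<beta> = (\<Sum>x\<in>UNIV. \<Sum>xh\<in>UNIV. \<Sum>y\<in>UNIV. \<Sum>z\<in>UNIV. \<Sum>w\<in>UNIV.
       d x xh * \<beta> xh y * \<alpha> y z w * p x z w)"

definition Pyw :: "('x::finite \<Rightarrow> 'x \<Rightarrow> 'w::finite \<Rightarrow> real) \<Rightarrow> ('y::finite \<Rightarrow> 'x \<Rightarrow> 'w \<Rightarrow> real)
    \<Rightarrow> 'y \<Rightarrow> 'w \<Rightarrow> real" where
  "Pyw p \<alpha> y w = (\<Sum>z\<in>UNIV. \<Sum>x\<in>UNIV. \<alpha> y z w * p x z w)"

definition Py :: "('x::finite \<Rightarrow> 'x \<Rightarrow> 'w::finite \<Rightarrow> real) \<Rightarrow> ('y::finite \<Rightarrow> 'x \<Rightarrow> 'w \<Rightarrow> real)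
    \<Rightarrow> 'y \<Rightarrow> real" where
  "Py p \<alpha> y = (\<Sum>w\<in>UNIV. Pyw p \<alpha> y w)"

definition Pw :: "('x::finite \<Rightarrow> 'x \<Rightarrow> 'w::finite \<Rightarrow> real) \<Rightarrow> 'w \<Rightarrow> real" where
  "Pw p w = (\<Sum>z\<in>UNIV. \<Sum>x\<in>UNIV. p x z w)"

text \<open>Mutual information I(Y;W) (natural logarithm), with the convention 0 log 0 = 0.\<close>
definition zeta :: "('x::finite \<Rightarrow> 'x \<Rightarrow> 'w::finite \<Rightarrow> real) \<Rightarrow> ('y::finite \<Rightarrow> 'x \<Rightarrow> 'w \<Rightarrow> real) \<Rightarrow> real" where
  "zeta p \<alpha> = (\<Sum>y\<in>UNIV. \<Sum>w\<in>UNIV.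
      (if Pyw p \<alpha> y w = 0 then 0
       else Pyw p \<alpha> y w * ln (Pyw p \<alpha> y w / (Py p \<alpha> y * Pw p w))))"

definition Ucost :: "('x::finite \<Rightarrow> 'x \<Rightarrow> 'w::finite \<Rightarrow> real) \<Rightarrow> ('x \<Rightarrow> 'x \<Rightarrow> real) \<Rightarrow> real
    \<Rightarrow> ('y::finite \<Rightarrow> 'x \<Rightarrow> 'w \<Rightarrow> real) \<Rightarrow> ('x \<Rightarrow> 'y \<Rightarrow> real) \<Rightarrow> real" where
  "Ucost p d \<rho> \<alpha> \<beta> = xi p d \<alpha> \<beta> + \<rho> * zeta p \<alpha>"

definition Vcost :: "('x::finite \<Rightarrow> 'x \<Rightarrow> 'w::finite \<Rightarrow> real) \<Rightarrow> ('x \<Rightarrow> 'x \<Rightarrow> real)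
    \<Rightarrow> ('y::finite \<Rightarrow> 'x \<Rightarrow> 'w \<Rightarrow> real) \<Rightarrow> ('x \<Rightarrow> 'y \<Rightarrow> real) \<Rightarrow> real" where
  "Vcost p d \<alpha> \<beta> = xi p d \<alpha> \<beta>"

definition Psi :: "('x::finite \<Rightarrow> 'x \<Rightarrow> 'w::finite \<Rightarrow> real) \<Rightarrow> ('x \<Rightarrow> 'x \<Rightarrow> real) \<Rightarrow> real
    \<Rightarrow> ('y::finite \<Rightarrow> 'x \<Rightarrow> 'w \<Rightarrow> real) \<Rightarrow> ('x \<Rightarrow> 'y \<Rightarrow> real) \<Rightarrow> real" where
  "Psi p d \<rho> \<alpha> \<beta> = xi p d \<alpha> \<beta> + \<rho> * zeta p \<alpha>"

definition epsNash :: "('x::finite \<Rightarrow> 'x \<Rightarrow> 'w::finite \<Rightarrow> real) \<Rightarrow> ('x \<Rightarrow> 'x \<Rightarrow> real) \<Rightarrow> real \<Rightarrow> real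
    \<Rightarrow> (('y::finite \<Rightarrow> 'x \<Rightarrow> 'w \<Rightarrow> real) \<times> ('x \<Rightarrow> 'y \<Rightarrow> real)) set" where
  "epsNash p d \<rho> \<epsilon> = {(\<alpha>, \<beta>). \<alpha> \<in> senderPolicies \<and> \<beta> \<in> receiverPolicies \<and>
      (\<forall>\<alpha>'\<in>senderPolicies. Ucost p d \<rho> \<alpha> \<beta> \<le> Ucost p d \<rho> \<alpha>' \<beta> + \<epsilon>) \<and>
      (\<forall>\<beta>'\<in>receiverPolicies. Vcost p d \<alpha> \<beta> \<le> Vcost p d \<alpha> \<beta>' + \<epsilon>)}"

end

theory Submission
  imports Defs
begin

text \<open>The game is an exact potential game with potential \<open>\<Psi>\<close>: the sender's cost is \<open>\<Psi>\<close>
itself, and the receiver's cost differs from \<open>\<Psi>\<close> by \<open>\<rho> \<zeta>(\<alpha>)\<close>, which does not depend on \<open>\<beta>\<close>.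
Hence every step in which a player actually changes its policy lowers \<open>\<Psi>\<close> by more than \<open>\<epsilon>\<close>,
and \<open>\<Psi> \<ge> 0\<close> (mutual information is nonnegative) bounds the number of such steps.
After its own step a player is always \<open>\<epsilon>\<close>-best, and it keeps still exactly when it is already
\<open>\<epsilon>\<close>-best; so once some step \<open>k \<ge> 1\<close> keeps still, both players are \<open>\<epsilon>\<close>-best and nothing
ever moves again.\<close>

definition eps_best :: "('a \<Rightarrow> real) \<Rightarrow> 'a set \<Rightarrow> real \<Rightarrow> 'a \<Rightarrow> bool" where
  "eps_best f S \<epsilon> x \<longleftrightarrow> (\<forall>a\<in>S. f x \<le> f a + \<epsilon>)"

definition eps_nash ::
    "'a set \<Rightarrow> 'b set \<Rightarrow> ('a \<Rightarrow> 'b \<Rightarrow> real) \<Rightarrow> ('a \<Rightarrow> 'b \<Rightarrow> real) \<Rightarrow> real \<Rightarrow> 'a \<Rightarrow> 'b \<Rightarrow> bool" where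
  "eps_nash S R U V \<epsilon> a b \<longleftrightarrow>
     a \<in> S \<and> b \<in> R \<and> eps_best (\<lambda>a'. U a' b) S \<epsilon> a \<and> eps_best (V a) R \<epsilon> b"

lemma threshold_step:
  assumes min: "a' \<in> S" "\<forall>a\<in>S. f a' \<le> f a"
    and eps: "0 \<le> \<epsilon>"
    and x': "x' = (if f x - f a' > \<epsilon> then a' else x)"
  shows "eps_best f S \<epsilon> x'"
    and "x' = x \<longleftrightarrow> eps_best f S \<epsilon> x"
    and "x' \<noteq> x \<Longrightarrow> f x' + \<epsilon> < f x"
proof -
  show best: "eps_best f S \<epsilon> x'"
    using min eps x' unfolding eps_best_def by (auto intro: order_trans)
  show "x' = x \<longleftrightarrow> eps_best f S \<epsilon> x"
    using best min x' unfolding eps_best_def by force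
  show "x' \<noteq> x \<Longrightarrow> f x' + \<epsilon> < f x"
    using x' by (auto split: if_splits)
qed

locale alternating_threshold_dynamics =
  fixes S :: "'a set" and R :: "'b set"
    and U V \<Phi> :: "'a \<Rightarrow> 'b \<Rightarrow> real"
    and \<epsilon> :: real
    and as :: "nat \<Rightarrow> 'a" and bs :: "nat \<Rightarrow> 'b"
  assumes eps_pos: "\<epsilon> > 0"
    and potential_U: "\<And>a a' b. a \<in> S \<Longrightarrow> a' \<in> S \<Longrightarrow> b \<in> R \<Longrightarrow> U a b - U a' b = \<Phi> a b - \<Phi> a' b"
    and potential_V: "\<And>a b b'. a \<in> S \<Longrightarrow> b \<in> R \<Longrightarrow> b' \<in> R \<Longrightarrow> V a b - V a b' = \<Phi> a b - \<Phi> a b'"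
    and potential_nonneg: "\<And>a b. a \<in> S \<Longrightarrow> b \<in> R \<Longrightarrow> \<Phi> a b \<ge> 0"
    and init: "as 0 \<in> S" "bs 0 \<in> R"
    and even_step: "\<And>i. even (Suc i) \<Longrightarrow> \<exists>a'. a' \<in> S \<and> (\<forall>a\<in>S. U a' (bs i) \<le> U a (bs i)) \<and>
        as (Suc i) = (if U (as i) (bs i) - U a' (bs i) > \<epsilon> then a' else as i) \<and> bs (Suc i) = bs i"
    and odd_step: "\<And>i. odd (Suc i) \<Longrightarrow> \<exists>b'. b' \<in> R \<and> (\<forall>b\<in>R. V (as i) b' \<le> V (as i) b) \<and>
        bs (Suc i) = (if V (as i) (bs i) - V (as i) b' > \<epsilon> then b' else bs i) \<and> as (Suc i) = as i"
begin

definition stays :: "nat \<Rightarrow> bool" where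
  "stays i \<longleftrightarrow> as (Suc i) = as i \<and> bs (Suc i) = bs i"

definition mover_eps_best :: "nat \<Rightarrow> nat \<Rightarrow> bool" where
  "mover_eps_best k j \<longleftrightarrow>
     (if even k then eps_best (\<lambda>a. U a (bs j)) S \<epsilon> (as j) else eps_best (V (as j)) R \<epsilon> (bs j))"

abbreviation potential :: "nat \<Rightarrow> real" where
  "potential k \<equiv> \<Phi> (as k) (bs k)"

lemma policies_mem: "as k \<in> S \<and> bs k \<in> R"
proof (induction k)
  case 0
  then show ?case using init by simp
next
  case (Suc k)
  then show ?case
    using even_step[of k] odd_step[of k] by (cases "even (Suc k)") auto
qed

lemma step_properties:
  "mover_eps_best (Suc i) (Suc i) \<and> (stays i \<longleftrightarrow> mover_eps_best (Suc i) i) \<and>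
   (\<not> stays i \<longrightarrow> potential (Suc i) + \<epsilon> < potential i)"
proof (cases "even (Suc i)")
  case True
  then obtain a' where a': "a' \<in> S" "\<forall>a\<in>S. U a' (bs i) \<le> U a (bs i)"
      and as': "as (Suc i) = (if U (as i) (bs i) - U a' (bs i) > \<epsilon> then a' else as i)"
      and bs': "bs (Suc i) = bs i"
    using even_step by blast
  note step = threshold_step[OF a' less_imp_le[OF eps_pos] as']
  have "potential (Suc i) + \<epsilon> < potential i" if "\<not> stays i"
    using step(3) that bs' potential_U[of "as (Suc i)" "as i" "bs i"] policies_mem
    unfolding stays_def by fastforce
  with step(1,2) True bs' show ?thesis
    unfolding mover_eps_best_def stays_def by simp
next
  case False
  then obtain b' where b': "b' \<in> R" "\<forall>b\<in>R. V (as i) b' \<le> V (as i) b"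
      and bs': "bs (Suc i) = (if V (as i) (bs i) - V (as i) b' > \<epsilon> then b' else bs i)"
      and as': "as (Suc i) = as i"
    using odd_step by blast
  note step = threshold_step[OF b' less_imp_le[OF eps_pos] bs']
  have "potential (Suc i) + \<epsilon> < potential i" if "\<not> stays i"
    using step(3) that as' potential_V[of "as i" "bs (Suc i)" "bs i"] policies_mem
    unfolding stays_def by fastforce
  with step(1,2) False as' show ?thesis
    unfolding mover_eps_best_def stays_def by simp
qed

lemma potential_antimono_step: "potential (Suc i) \<le> potential i"
  using step_properties[of i] eps_pos by (cases "stays i") (auto simp: stays_def)

lemma stays_Suc:
  assumes "stays (Suc i)"
  shows "stays (Suc (Suc i))"
proof -
  have "mover_eps_best (Suc i) (Suc i)"
    using step_properties by blast
  then have "mover_eps_best (Suc (Suc (Suc i))) (Suc (Suc i))"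
    using assms unfolding mover_eps_best_def stays_def by simp
  then show ?thesis
    using step_properties by blast
qed

lemma stays_mono:
  assumes "stays (Suc i)" "i \<le> j"
  shows "stays (Suc j)"
  using assms(2,1) by (induction j rule: dec_induct) (auto intro: stays_Suc)

lemma eps_nash_if_stays:
  assumes "stays (Suc i)"
  shows "eps_nash S R U V \<epsilon> (as (Suc (Suc i))) (bs (Suc (Suc i)))"
proof -
  have "mover_eps_best (Suc i) (Suc i)" "mover_eps_best (Suc (Suc i)) (Suc i)"
    using step_properties assms by blast+
  then show ?thesis
    using assms policies_mem unfolding mover_eps_best_def stays_def eps_nash_def
    by (cases "even (Suc i)") auto
qed

lemma potential_descent:
  assumes "\<forall>j\<in>{m..<m + n}. \<not> stays j"
  shows "potential (m + n) + real n * \<epsilon> \<le> potential m"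
  using assms
proof (induction n)
  case 0
  then show ?case by simp
next
  case (Suc n)
  then have "potential (m + Suc n) + \<epsilon> < potential (m + n)"
    using step_properties[of "m + n"] by simp
  with Suc show ?case
    by (simp add: algebra_simps)
qed

theorem eventually_eps_nash:
  assumes k: "real k \<ge> 3 + \<Phi> (as 0) (bs 0) / \<epsilon>"
  shows "eps_nash S R U V \<epsilon> (as k) (bs k)"
proof -
  have "\<Phi> (as 0) (bs 0) / \<epsilon> \<ge> 0"
    using potential_nonneg[OF init] eps_pos by simp
  with k have "k \<ge> 2" by linarith
  then obtain n where n: "k = Suc (Suc n)"
    using le_iff_add by (metis add_2_eq_Suc)
  with k have n_bound: "real n \<ge> 1 + potential 0 / \<epsilon>" by simp
  show ?thesis
  proof (cases "stays (Suc n)")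
    case True
    then show ?thesis using eps_nash_if_stays n by simp
  next
    case False
    have "\<not> stays j" if "j \<in> {1..<1 + n}" for j
    proof
      assume "stays j"
      moreover have "j = Suc (j - 1)" "j - 1 \<le> n"
        using that by auto
      ultimately show False
        using False stays_mono by metis
    qed
    then have "potential (1 + n) + real n * \<epsilon> \<le> potential 1"
      by (intro potential_descent) blast
    moreover have "potential 1 \<le> potential 0" "potential (1 + n) \<ge> 0"
      using potential_antimono_step[of 0] potential_nonneg policies_mem by auto
    ultimately have "real n \<le> potential 0 / \<epsilon>"
      using eps_pos by (simp add: pos_le_divide_eq)
    with n_bound show ?thesis by simp
  qed
qed

end

lemma gibbs_term_ge_diff:
  fixes P Q :: real
  assumes "0 \<le> P" "0 \<le> Q" "P > 0 \<Longrightarrow> Q > 0"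
  shows "P - Q \<le> (if P = 0 then 0 else P * ln (P / Q))"
proof (cases "P = 0")
  case False
  with assms have P: "P > 0" and Q: "Q > 0" by auto
  have "P * ln (Q / P) \<le> P * (Q / P - 1)"
    using P Q by (intro mult_left_mono ln_le_minus_one) auto
  also have "\<dots> = Q - P"
    using P by (simp add: field_simps)
  finally show ?thesis
    using P Q False by (simp add: ln_div algebra_simps)
qed (use assms in simp)

lemma sum_Pw:
  assumes "pmf3 p"
  shows "(\<Sum>w\<in>UNIV. Pw p w) = 1"
proof -
  have "(\<Sum>w\<in>UNIV. Pw p w) = (\<Sum>w\<in>UNIV. \<Sum>x\<in>UNIV. \<Sum>z\<in>UNIV. p x z w)"
    unfolding Pw_def by (intro sum.cong refl sum.swap)
  also have "\<dots> = (\<Sum>x\<in>UNIV. \<Sum>z\<in>UNIV. \<Sum>w\<in>UNIV. p x z w)"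
    by (subst sum.swap) (intro sum.cong refl sum.swap)
  finally show ?thesis
    using assms unfolding pmf3_def by simp
qed

lemma sum_Pyw:
  assumes "\<alpha> \<in> senderPolicies"
  shows "(\<Sum>y\<in>UNIV. \<Sum>w\<in>UNIV. Pyw p \<alpha> y w) = (\<Sum>w\<in>UNIV. Pw p w)"
proof -
  have "(\<Sum>y\<in>UNIV. \<Sum>w\<in>UNIV. Pyw p \<alpha> y w) =
        (\<Sum>w\<in>UNIV. \<Sum>z\<in>UNIV. \<Sum>y\<in>UNIV. \<Sum>x\<in>UNIV. \<alpha> y z w * p x z w)"
    unfolding Pyw_def by (subst sum.swap) (intro sum.cong refl sum.swap)
  also have "\<dots> = (\<Sum>w\<in>UNIV. \<Sum>z\<in>UNIV. \<Sum>x\<in>UNIV. (\<Sum>y\<in>UNIV. \<alpha> y z w) * p x z w)"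
    unfolding sum_distrib_right by (intro sum.cong refl sum.swap)
  finally show ?thesis
    using assms unfolding senderPolicies_def Pw_def by simp
qed

lemma mutual_information_nonneg:
  assumes p: "pmf3 p" and \<alpha>: "\<alpha> \<in> senderPolicies"
  shows "zeta p \<alpha> \<ge> 0"
proof -
  have p_nonneg: "p x z w \<ge> 0" for x z w
    using p unfolding pmf3_def by auto
  have \<alpha>_bounds: "0 \<le> \<alpha> y z w" "\<alpha> y z w \<le> 1" for y z w
    using \<alpha> unfolding senderPolicies_def by auto
  have Pyw_nonneg: "Pyw p \<alpha> y w \<ge> 0" for y w
    unfolding Pyw_def using p_nonneg \<alpha>_bounds by (simp add: sum_nonneg)
  have Pyw_le_Py: "Pyw p \<alpha> y w \<le> Py p \<alpha> y" for y w
    unfolding Py_def using Pyw_nonneg by (intro member_le_sum) auto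
  have Pyw_le_Pw: "Pyw p \<alpha> y w \<le> Pw p w" for y w
    unfolding Pyw_def Pw_def using p_nonneg \<alpha>_bounds by (intro sum_mono) (simp add: mult_left_le_one_le)
  have "Pyw p \<alpha> y w - Py p \<alpha> y * Pw p w \<le>
        (if Pyw p \<alpha> y w = 0 then 0 else Pyw p \<alpha> y w * ln (Pyw p \<alpha> y w / (Py p \<alpha> y * Pw p w)))"
    for y w
    using Pyw_nonneg[of y w] Pyw_le_Py[of y w] Pyw_le_Pw[of y w]
    by (intro gibbs_term_ge_diff) (auto intro: mult_pos_pos)
  then have "(\<Sum>y\<in>UNIV. \<Sum>w\<in>UNIV. Pyw p \<alpha> y w - Py p \<alpha> y * Pw p w) \<le> zeta p \<alpha>"
    unfolding zeta_def by (intro sum_mono) auto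
  moreover have "(\<Sum>y\<in>UNIV. \<Sum>w\<in>UNIV. Pyw p \<alpha> y w - Py p \<alpha> y * Pw p w) = 0"
    using sum_Pyw[OF \<alpha>, of p] sum_Pw[OF p]
    by (simp add: sum_subtractf sum_product[symmetric] Py_def)
  ultimately show ?thesis by simp
qed

lemma xi_nonneg:
  assumes "pmf3 p" "\<forall>x xh. d x xh \<ge> 0" "\<alpha> \<in> senderPolicies" "\<beta> \<in> receiverPolicies"
  shows "xi p d \<alpha> \<beta> \<ge> 0"
  using assms unfolding xi_def pmf3_def senderPolicies_def receiverPolicies_def
  by (intro sum_nonneg) simp

theorem mainTheorem6:
  fixes p :: "'x::finite \<Rightarrow> 'x \<Rightarrow> 'w::finite \<Rightarrow> real"
    and d :: "'x \<Rightarrow> 'x \<Rightarrow> real"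
    and \<rho> \<epsilon> :: real
    and as :: "nat \<Rightarrow> ('y::finite \<Rightarrow> 'x \<Rightarrow> 'w \<Rightarrow> real)"
    and bs :: "nat \<Rightarrow> ('x \<Rightarrow> 'y \<Rightarrow> real)"
  assumes p: "pmf3 p"
    and d: "\<forall>x xh. d x xh \<ge> 0"
    and rho: "\<rho> \<ge> 0"
    and eps: "\<epsilon> > 0"
    and init: "as 0 \<in> senderPolicies" "bs 0 \<in> receiverPolicies"
    and even_step: "\<forall>k. k \<ge> 1 \<and> even k \<longrightarrow>
        (\<exists>\<alpha>'. \<alpha>' \<in> senderPolicies \<and>
              (\<forall>\<alpha>\<in>senderPolicies. Ucost p d \<rho> \<alpha>' (bs (k - 1)) \<le> Ucost p d \<rho> \<alpha> (bs (k - 1))) \<and>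
              as k = (if Ucost p d \<rho> (as (k - 1)) (bs (k - 1)) - Ucost p d \<rho> \<alpha>' (bs (k - 1)) > \<epsilon>
                      then \<alpha>' else as (k - 1)) \<and>
              bs k = bs (k - 1))"
    and odd_step: "\<forall>k. k \<ge> 1 \<and> odd k \<longrightarrow>
        (\<exists>\<beta>'. \<beta>' \<in> receiverPolicies \<and>
              (\<forall>\<beta>\<in>receiverPolicies. Vcost p d (as (k - 1)) \<beta>' \<le> Vcost p d (as (k - 1)) \<beta>) \<and>
              bs k = (if Vcost p d (as (k - 1)) (bs (k - 1)) - Vcost p d (as (k - 1)) \<beta>' > \<epsilon>
                      then \<beta>' else bs (k - 1)) \<and>
              as k = as (k - 1))"
  shows "\<forall>k. real k \<ge> 3 + Psi p d \<rho> (as 0) (bs 0) / \<epsilon> \<longrightarrow> (as k, bs k) \<in> epsNash p d \<rho> \<epsilon>"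
proof -
  interpret alternating_threshold_dynamics senderPolicies receiverPolicies
    "Ucost p d \<rho>" "Vcost p d" "Psi p d \<rho>" \<epsilon> as bs
  proof
    show "0 \<le> Psi p d \<rho> a b" if "a \<in> senderPolicies" "b \<in> receiverPolicies" for a b
      using xi_nonneg[OF p d that] mutual_information_nonneg[OF p that(1)] rho
      unfolding Psi_def by simp
    show "\<exists>a'. a' \<in> senderPolicies \<and> (\<forall>a\<in>senderPolicies. Ucost p d \<rho> a' (bs i) \<le> Ucost p d \<rho> a (bs i)) \<and>
        as (Suc i) = (if Ucost p d \<rho> (as i) (bs i) - Ucost p d \<rho> a' (bs i) > \<epsilon> then a' else as i) \<and>
        bs (Suc i) = bs i" if "even (Suc i)" for i
      using even_step[rule_format, of "Suc i"] that unfolding diff_Suc_1 by simp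
    show "\<exists>b'. b' \<in> receiverPolicies \<and> (\<forall>b\<in>receiverPolicies. Vcost p d (as i) b' \<le> Vcost p d (as i) b) \<and>
        bs (Suc i) = (if Vcost p d (as i) (bs i) - Vcost p d (as i) b' > \<epsilon> then b' else bs i) \<and>
        as (Suc i) = as i" if "odd (Suc i)" for i
      using odd_step[rule_format, of "Suc i"] that unfolding diff_Suc_1 by simp
  qed (use eps init in \<open>auto simp: Ucost_def Vcost_def Psi_def\<close>)
  show ?thesis
    using eventually_eps_nash unfolding epsNash_def eps_nash_def eps_best_def by simp
qed

end
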